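(* Let $\lambda=[4,2,2]$ and $\mu=[5,3]$. Then $\lambda\preccurlyeq_S\mu$, but $\lambda$ does not stably embed into $\mu$, i.e. there is no integral partition $\nu$ with $\lambda\times\nu\hookrightarrow\mu\times\nu$.
   Context: Partitions are finite nonincreasing sequences of positive integers. The product $\lambda\times\nu$ is the partition of all products $\lambda_i\nu_j$, reordered nonincreasingly. $\lambda=[\lambda_1,\ldots,\lambda_m]$ embeds into $\mu=[\mu_1,\ldots,\mu_n]$, written $\lambda\hookrightarrow\mu$, if there is a map $\varphi:\{1,\ldots,m\}\to\{1,\ldots,n\}$ with $\sum_{i\in\varphi^{-1}(j)}\lambda_i\le\mu_j$ for all $j$. $\lambda\preccurlyeq_S\mu$ means: for every $x\in\mathbb N$, $\sum_{\lambda_i\ge x}\lambda_i\le\sum_{\mu_j\ge x}\mu_j$. *)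

theory Defs
  imports Main
begin

definition is_partition :: "nat list \<Rightarrow> bool" where
  "is_partition xs \<longleftrightarrow> sorted_wrt (\<ge>) xs \<and> (\<forall>x\<in>set xs. 0 < x)"

definition pprod :: "nat list \<Rightarrow> nat list \<Rightarrow> nat list" where
  "pprod l n = rev (sort [a * b. a \<leftarrow> l, b \<leftarrow> n])"

definition embeds :: "nat list \<Rightarrow> nat list \<Rightarrow> bool" where
  "embeds l m \<longleftrightarrow> (\<exists>\<phi> :: nat \<Rightarrow> nat.
      (\<forall>i < length l. \<phi> i < length m) \<and>
      (\<forall>j < length m. (\<Sum>i \<in> {i. i < length l \<and> \<phi> i = j}. l ! i) \<le> m ! j))"

definition dom_S :: "nat list \<Rightarrow> nat list \<Rightarrow> bool" where
  "dom_S l m \<longleftrightarrow> (\<forall>x::nat. sum_list (filter (\<lambda>a. x \<le> a) l) \<le> sum_list (filter (\<lambda>a. x \<le> a) m))"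

end

theory Submission
  imports Defs "HOL-Computational_Algebra.Primes"
begin

text \<open>Since \<open>\<lambda>\<close> and \<open>\<mu>\<close> both have sum 8, so do \<open>\<lambda> \<times> \<nu>\<close> and \<open>\<mu> \<times> \<nu>\<close> (times the sum of \<open>\<nu>\<close>),
  so an embedding of one into the other must fill every part of \<open>\<mu> \<times> \<nu>\<close> exactly.
  Let \<open>2\<^sup>k\<close> be the largest power of 2 dividing all parts of \<open>\<nu>\<close>, and \<open>x\<close> a part of \<open>\<nu>\<close> not
  divisible by \<open>2\<^sup>k\<^sup>+\<^sup>1\<close>. All parts of \<open>\<lambda>\<close> are even, so every part of \<open>\<lambda> \<times> \<nu>\<close> is divisible
  by \<open>2\<^sup>k\<^sup>+\<^sup>1\<close>, whereas the part \<open>5x\<close> of \<open>\<mu> \<times> \<nu>\<close> is not: it cannot be filled exactly.\<close>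

definition stably_embeds :: "nat list \<Rightarrow> nat list \<Rightarrow> bool" where
  "stably_embeds l m \<longleftrightarrow> (\<exists>\<nu>. is_partition \<nu> \<and> \<nu> \<noteq> [] \<and> embeds (pprod l \<nu>) (pprod m \<nu>))"

lemma sum_list_pprod: "sum_list (pprod l n) = sum_list l * sum_list n"
proof -
  have "sum_list (pprod l n) = sum_list [a * b. a \<leftarrow> l, b \<leftarrow> n]"
    unfolding pprod_def by (metis mset_rev mset_sort sum_mset_sum_list)
  also have "\<dots> = sum_list l * sum_list n"
    by (induction l) (auto simp: sum_list_const_mult algebra_simps)
  finally show ?thesis .
qed

lemma set_pprod: "set (pprod l n) = {a * b | a b. a \<in> set l \<and> b \<in> set n}"
  unfolding pprod_def by auto

lemma embeds_same_sum_exact: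
  assumes "embeds l m" and sum_eq: "sum_list l = sum_list m"
  obtains \<phi> where "\<forall>i < length l. \<phi> i < length m"
    and "\<forall>j < length m. (\<Sum>i \<in> {i. i < length l \<and> \<phi> i = j}. l ! i) = m ! j"
proof -
  from \<open>embeds l m\<close> obtain \<phi> where into: "\<forall>i < length l. \<phi> i < length m"
    and fits: "\<forall>j < length m. (\<Sum>i \<in> {i. i < length l \<and> \<phi> i = j}. l ! i) \<le> m ! j"
    unfolding embeds_def by blast
  define load where "load j = (\<Sum>i \<in> {i. i < length l \<and> \<phi> i = j}. l ! i)" for j
  have "(\<Sum>j<length m. load j) = (\<Sum>i<length l. l ! i)"
    unfolding load_def using into sum.group[of "{..<length l}" "{..<length m}" \<phi> "(!) l"]
    by (simp add: image_subset_iff)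
  also have "\<dots> = (\<Sum>j<length m. m ! j)"
    using sum_eq by (simp add: sum_list_sum_nth atLeast0LessThan)
  finally have "\<forall>j<length m. load j = m ! j"
    using fits by (auto intro: sum_mono_inv simp flip: load_def)
  with into show thesis using that unfolding load_def by blast
qed

lemma embeds_same_sum_dvd:
  assumes "embeds l m" "sum_list l = sum_list m"
    and "\<forall>a \<in> set l. d dvd a" "b \<in> set m"
  shows "d dvd b"
proof -
  obtain \<phi> where "\<forall>j < length m. (\<Sum>i \<in> {i. i < length l \<and> \<phi> i = j}. l ! i) = m ! j"
    using embeds_same_sum_exact assms(1,2) by blast
  moreover obtain j where "j < length m" "b = m ! j"
    using \<open>b \<in> set m\<close> by (auto simp: in_set_conv_nth)
  moreover have "d dvd (\<Sum>i \<in> {i. i < length l \<and> \<phi> i = j}. l ! i)"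
    using assms(3) by (intro dvd_sum) auto
  ultimately show ?thesis by simp
qed

lemma exact_common_power_dvd:
  fixes p :: nat
  assumes "p \<noteq> 1" "ns \<noteq> []" "0 \<notin> set ns"
  obtains k x where "\<forall>y \<in> set ns. p ^ k dvd y" "x \<in> set ns" "\<not> p ^ Suc k dvd x"
proof -
  define k where "k = Min (multiplicity p ` set ns)"
  have "k \<in> multiplicity p ` set ns"
    unfolding k_def using \<open>ns \<noteq> []\<close> by (intro Min_in) auto
  then obtain x where x: "x \<in> set ns" "multiplicity p x = k"
    by blast
  have "\<forall>y \<in> set ns. p ^ k dvd y"
    unfolding k_def by (auto intro: multiplicity_dvd')
  moreover have "\<not> p ^ Suc k dvd x"
  proof -
    have "x \<noteq> 0" using x(1) \<open>0 \<notin> set ns\<close> by metis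
    then show ?thesis using x(2) \<open>p \<noteq> 1\<close> by (subst power_dvd_iff_le_multiplicity) auto
  qed
  ultimately show thesis using that x(1) by blast
qed

lemma not_stably_embeds_prime_obstruction:
  fixes p :: nat
  assumes "prime p" "\<forall>a \<in> set l. p dvd a" "b \<in> set m" "\<not> p dvd b"
    and "sum_list l = sum_list m"
  shows "\<not> stably_embeds l m"
proof
  assume "stably_embeds l m"
  then obtain \<nu> where \<nu>: "is_partition \<nu>" "\<nu> \<noteq> []" and emb: "embeds (pprod l \<nu>) (pprod m \<nu>)"
    unfolding stably_embeds_def by blast
  have "0 \<notin> set \<nu>" using \<nu>(1) unfolding is_partition_def by auto
  then obtain k x where common: "\<forall>y \<in> set \<nu>. p ^ k dvd y"
    and x: "x \<in> set \<nu>" "\<not> p ^ Suc k dvd x"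
    using exact_common_power_dvd \<open>prime p\<close> \<nu>(2) by (metis not_prime_1)
  have "\<forall>a \<in> set (pprod l \<nu>). p ^ Suc k dvd a"
    using assms(2) common unfolding set_pprod by (auto intro: mult_dvd_mono)
  moreover have "b * x \<in> set (pprod m \<nu>)"
    using \<open>b \<in> set m\<close> x(1) unfolding set_pprod by blast
  moreover have "sum_list (pprod l \<nu>) = sum_list (pprod m \<nu>)"
    using assms(5) by (simp add: sum_list_pprod)
  ultimately have "p ^ Suc k dvd b * x"
    using embeds_same_sum_dvd emb by blast
  moreover have "coprime (p ^ Suc k) b"
    using assms(1,4) by (simp add: prime_imp_coprime)
  ultimately show False
    using x(2) by (simp add: coprime_dvd_mult_right_iff)
qed

theorem mainTheorem6:
  shows "dom_S [4,2,2] [5,3] \<and>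
    \<not> (\<exists>\<nu>. is_partition \<nu> \<and> \<nu> \<noteq> [] \<and> embeds (pprod [4,2,2] \<nu>) (pprod [5,3] \<nu>))"
proof
  show "dom_S [4,2,2] [5,3]"
    unfolding dom_S_def
  proof
    fix x :: nat
    consider "x \<le> 2" | "x = 3" | "x = 4" | "x = 5" | "x > 5" by linarith
    then show "sum_list (filter (\<lambda>a. x \<le> a) [4,2,2]) \<le> sum_list (filter (\<lambda>a. x \<le> a) [5,3])"
      by cases auto
  qed
  have "\<not> stably_embeds [4,2,2] [5,3]"
    by (rule not_stably_embeds_prime_obstruction[where p = 2 and b = 5]) auto
  then show "\<not> (\<exists>\<nu>. is_partition \<nu> \<and> \<nu> \<noteq> [] \<and> embeds (pprod [4,2,2] \<nu>) (pprod [5,3] \<nu>))"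
    unfolding stably_embeds_def .
qed

end
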